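(* Let $\gamma(du\mid h)$ be a finite-memory policy and suppose there exist non-trivial (nonzero) measures $\lambda_x$ on $\mathbb{X}$ and $\lambda_u$ on $\mathbb{U}$ such that $\mathcal{T}(dx_1\mid x,u)\ge\lambda_x(dx_1)$ for all $(x,u)\in\mathbb{X}\times\mathbb{U}$ and $\gamma(du\mid h)\ge\lambda_u(du)$ for all $h\in\mathbb{H}$. Then the Markov chain $(h_t,X_t,U_t)$ under $\gamma$ is exponentially ergodic.
   Context: POMDP: $\mathbb{X}\subset\mathbb{R}^m$, $\mathbb{Y}\subset\mathbb{R}^n$, $\mathbb{U}\subset\mathbb{R}^l$ Borel sets; transition kernel $\mathcal{T}(dx'\mid x,u)$ from $\mathbb{X}\times\mathbb{U}$ to $\mathbb{X}$, observation kernel $O(dy\mid x)$ from $\mathbb{X}$ to $\mathbb{Y}$; conditionally on the past, $Y_t\sim O(\cdot\mid X_t)$ and $X_{t+1}\sim\mathcal{T}(\cdot\mid X_t,U_t)$. Fix a memory length $N\ge1$; the finite-memory variable is $h_t=(Y_t,\dots,Y_{t-N},U_{t-1},\dots,U_{t-N})\in\mathbb{H}:=\mathbb{Y}^{N+1}\times\mathbb{U}^N$. A finite-memory policy is a stochastic kernel $\gamma(du\mid h)$ from $\mathbb{H}$ to $\mathbb{U}$ with $U_t\sim\gamma(\cdot\mid h_t)$; under it $(h_t,X_t,U_t)$ is a Markov chain. Exponential ergodicity means this chain has a unique invariant probability measure and converges to it exponentially fast in total variation from every initial condition. *)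

theory Defs
  imports "HOL-Probability.Probability"
begin

definition bspace :: "'a::euclidean_space set \<Rightarrow> 'a measure" where
  "bspace A = restrict_space borel A"

text \<open>Finite-memory space H = Y^(N+1) x U^N.  A memory value is a pair (ys, us)
  with ys i = Y_(t-i) for i in {0..N} and us j = U_(t-j) for j in {1..N}.\<close>
definition mem_space :: "nat \<Rightarrow> 'y measure \<Rightarrow> 'u measure \<Rightarrow> ((nat \<Rightarrow> 'y) \<times> (nat \<Rightarrow> 'u)) measure" where
  "mem_space N MY MU = (PiM {..N} (\<lambda>_. MY)) \<Otimes>\<^sub>M (PiM {1..N} (\<lambda>_. MU))"

text \<open>Memory update: h_(t+1) from h_t, the new observation Y_(t+1) and the action U_t.\<close>
definition mem_shift :: "nat \<Rightarrow> (nat \<Rightarrow> 'y) \<times> (nat \<Rightarrow> 'u) \<Rightarrow> 'y \<Rightarrow> 'u \<Rightarrow> (nat \<Rightarrow> 'y) \<times> (nat \<Rightarrow> 'u)" where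
  "mem_shift N h y u =
     ((\<lambda>i\<in>{..N}. if i = 0 then y else fst h (i - 1)),
      (\<lambda>j\<in>{1..N}. if j = 1 then u else snd h (j - 1)))"

definition fm_kernel ::
  "(((nat \<Rightarrow> 'y) \<times> (nat \<Rightarrow> 'u)) \<times> 'x \<times> 'u) measure \<Rightarrow> nat \<Rightarrow> ('x \<times> 'u \<Rightarrow> 'x measure) \<Rightarrow> ('x \<Rightarrow> 'y measure) \<Rightarrow>
   ((nat \<Rightarrow> 'y) \<times> (nat \<Rightarrow> 'u) \<Rightarrow> 'u measure) \<Rightarrow>
   ((nat \<Rightarrow> 'y) \<times> (nat \<Rightarrow> 'u)) \<times> 'x \<times> 'u \<Rightarrow>
   (((nat \<Rightarrow> 'y) \<times> (nat \<Rightarrow> 'u)) \<times> 'x \<times> 'u) measure" where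
  "fm_kernel S N T Obs \<gamma> z =
     (case z of (h, x, u) \<Rightarrow>
        T (x, u) \<bind> (\<lambda>x'. Obs x' \<bind> (\<lambda>y'.
          let h' = mem_shift N h y' u in \<gamma> h' \<bind> (\<lambda>u'. return S (h', x', u')))))"

fun kernel_pow :: "'a measure \<Rightarrow> ('a \<Rightarrow> 'a measure) \<Rightarrow> nat \<Rightarrow> 'a \<Rightarrow> 'a measure" where
  "kernel_pow S P 0 z = return S z"
| "kernel_pow S P (Suc n) z = kernel_pow S P n z \<bind> P"

definition tv_dist :: "'a measure \<Rightarrow> 'a measure \<Rightarrow> real" where
  "tv_dist \<mu> \<nu> = (SUP A \<in> sets \<mu>. \<bar>measure \<mu> A - measure \<nu> A\<bar>)"

definition exp_ergodic :: "'a measure \<Rightarrow> ('a \<Rightarrow> 'a measure) \<Rightarrow> bool" where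
  "exp_ergodic S P \<longleftrightarrow>
     (\<exists>\<pi>. prob_space \<pi> \<and> sets \<pi> = sets S \<and> (\<pi> \<bind> P) = \<pi> \<and>
        (\<forall>\<nu>. prob_space \<nu> \<and> sets \<nu> = sets S \<and> (\<nu> \<bind> P) = \<nu> \<longrightarrow> \<nu> = \<pi>) \<and>
        (\<exists>\<rho>::real. 0 \<le> \<rho> \<and> \<rho> < 1 \<and>
           (\<forall>z\<in>space S. \<exists>C::real. \<forall>n. tv_dist (kernel_pow S P n z) \<pi> \<le> C * \<rho> ^ n)))"

end

theory Submission
  imports Defs
begin

text \<open>Doeblin's argument. If the \<open>m\<close>-step kernel \<open>P\<^sup>m\<close> dominates a fixed measure \<open>\<nu>\<close> of
  mass \<open>c > 0\<close> from every state, then \<open>P\<^sup>m\<close> contracts the distance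
  \<open>sup {\<bar>\<mu> g - \<mu>' g\<bar> | 0 \<le> g \<le> 1}\<close> by the factor \<open>1 - c\<close>; this gives a unique invariant law
  and geometric convergence to it in total variation.

  For the finite-memory chain one can take \<open>m = N + 1\<close>. Drawing the first hidden state from
  \<open>\<lambda>\<^sub>x\<close> and every action from \<open>\<lambda>\<^sub>u\<close> only decreases the \<open>(N + 1)\<close>-step law, and after
  \<open>N + 1\<close> steps the memory has been entirely renewed, so the resulting sub-probability law no
  longer depends on the starting state. Its mass is \<open>\<lambda>\<^sub>x(X) \<lambda>\<^sub>u(U)^(N + 1) > 0\<close>.\<close>

section \<open>Kernels and the Giry monad\<close>

lemma le_measureI:
  assumes "sets M = sets S" and "sets M' = sets S"
    and "\<And>A. A \<in> sets S \<Longrightarrow> emeasure M A \<le> emeasure M' A"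
  shows "M \<le> M'"
proof -
  have "emeasure M A \<le> emeasure M' A" for A
    using assms by (cases "A \<in> sets S") (auto simp: emeasure_notin_sets)
  then show ?thesis
    using assms sets_eq_imp_space_eq[of M M'] by (simp add: le_measure_iff le_fun_def)
qed

lemma bind_assoc_sets:
  assumes "sets M = sets S" and "f \<in> S \<rightarrow>\<^sub>M subprob_algebra N" and "g \<in> N \<rightarrow>\<^sub>M subprob_algebra R"
  shows "bind (bind M f) g = bind M (\<lambda>x. bind (f x) g)"
  by (rule bind_assoc) (use assms measurable_cong_sets[OF assms(1) refl] in auto)

lemma bind_assoc_cong:
  assumes "sets M = sets S" and "f \<in> S \<rightarrow>\<^sub>M subprob_algebra N" and "g \<in> N \<rightarrow>\<^sub>M subprob_algebra R"
    and "\<And>x. x \<in> space S \<Longrightarrow> bind (f x) g = h x"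
  shows "bind (bind M f) g = bind M h"
  unfolding bind_assoc_sets[OF assms(1-3)]
  using assms(4) sets_eq_imp_space_eq[OF assms(1)] by (intro bind_cong) auto

lemma bind_in_space_prob_algebra:
  assumes "\<mu> \<in> space (prob_algebra M)" and "K \<in> M \<rightarrow>\<^sub>M prob_algebra N"
  shows "\<mu> \<bind> K \<in> space (prob_algebra N)"
  using prob_space_bind'[OF assms] sets_bind'[OF assms] by (simp add: space_prob_algebra)

lemma emeasure_bind_mono:
  assumes sM': "sets M' = sets M0" and sM: "sets M = sets M0"
    and K': "K' \<in> M0 \<rightarrow>\<^sub>M subprob_algebra N" and K: "K \<in> M0 \<rightarrow>\<^sub>M subprob_algebra N"
    and M_le: "\<And>A. A \<in> sets M0 \<Longrightarrow> emeasure M' A \<le> emeasure M A"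
    and K_le: "\<And>z A. z \<in> space M0 \<Longrightarrow> A \<in> sets N \<Longrightarrow> emeasure (K' z) A \<le> emeasure (K z) A"
    and A: "A \<in> sets N"
  shows "emeasure (M' \<bind> K') A \<le> emeasure (M \<bind> K) A"
proof (cases "space M0 = {}")
  case True
  then have "space M' = {}" using sets_eq_imp_space_eq[OF sM'] by simp
  moreover have "emeasure (count_space {}) A = 0"
    by (cases "A = {}") (auto simp: emeasure_notin_sets)
  ultimately show ?thesis by (simp add: bind_empty)
next
  case False
  have space: "space M' = space M0" "space M = space M0"
    using sets_eq_imp_space_eq[OF sM'] sets_eq_imp_space_eq[OF sM] by auto
  have "M' \<le> M"
    using sM' sM M_le by (rule le_measureI)
  have "emeasure (M' \<bind> K') A = (\<integral>\<^sup>+z. emeasure (K' z) A \<partial>M')"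
    using False space K' by (intro emeasure_bind[OF _ _ A]) (auto cong: measurable_cong_sets[OF sM' refl])
  also have "\<dots> \<le> (\<integral>\<^sup>+z. emeasure (K z) A \<partial>M')"
    using K_le A space by (intro nn_integral_mono) auto
  also have "\<dots> \<le> (\<integral>\<^sup>+z. emeasure (K z) A \<partial>M)"
    using \<open>M' \<le> M\<close> sM sM' by (intro nn_integral_mono_measure) auto
  also have "\<dots> = emeasure (M \<bind> K) A"
    using False space K by (intro emeasure_bind[OF _ _ A, symmetric]) (auto cong: measurable_cong_sets[OF sM refl])
  finally show ?thesis .
qed

lemma emeasure_bind_space_const:
  assumes "sets M = sets M0" and "space M0 \<noteq> {}" and f: "f \<in> M0 \<rightarrow>\<^sub>M subprob_algebra N"
    and "\<And>x. x \<in> space M0 \<Longrightarrow> emeasure (f x) (space N) = a"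
  shows "emeasure (M \<bind> f) (space N) = a * emeasure M (space M)"
proof -
  have space: "space M = space M0" using sets_eq_imp_space_eq[OF assms(1)] .
  have "emeasure (M \<bind> f) (space N) = (\<integral>\<^sup>+x. emeasure (f x) (space N) \<partial>M)"
    using assms(2) space f by (intro emeasure_bind) (auto cong: measurable_cong_sets[OF assms(1) refl])
  also have "\<dots> = (\<integral>\<^sup>+x. a \<partial>M)"
    using assms(4) space by (intro nn_integral_cong) auto
  finally show ?thesis by simp
qed

context
  fixes S :: "'a measure" and P :: "'a \<Rightarrow> 'a measure"
  assumes P: "P \<in> S \<rightarrow>\<^sub>M prob_algebra S"
begin

lemma measurable_kernel_pow: "kernel_pow S P n \<in> S \<rightarrow>\<^sub>M prob_algebra S"
proof (induction n)
  case 0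
  show ?case by (simp add: measurable_return_prob_space)
next
  case (Suc n)
  have "(\<lambda>z. kernel_pow S P n z \<bind> P) \<in> S \<rightarrow>\<^sub>M prob_algebra S"
    by (rule measurable_bind_prob_space[OF Suc P])
  then show ?case by simp
qed

lemma measurable_kernel_pow_subprob: "kernel_pow S P n \<in> S \<rightarrow>\<^sub>M subprob_algebra S"
  using measurable_kernel_pow by (rule measurable_prob_algebraD)

lemma kernel_pow_in_prob_algebra: "z \<in> space S \<Longrightarrow> kernel_pow S P n z \<in> space (prob_algebra S)"
  using measurable_kernel_pow by (rule measurable_space)

lemma sets_kernel_pow: "z \<in> space S \<Longrightarrow> sets (kernel_pow S P n z) = sets S"
  using kernel_pow_in_prob_algebra by (simp add: space_prob_algebra)

lemma kernel_pow_1: "z \<in> space S \<Longrightarrow> kernel_pow S P 1 z = P z"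
  using bind_return[OF measurable_prob_algebraD[OF P]] by simp

lemma kernel_pow_add:
  assumes z: "z \<in> space S"
  shows "kernel_pow S P (a + b) z = kernel_pow S P a z \<bind> kernel_pow S P b"
proof (induction b)
  case 0
  show ?case by (simp add: bind_return'' sets_kernel_pow[OF z])
next
  case (Suc b)
  have "kernel_pow S P (a + Suc b) z = kernel_pow S P a z \<bind> kernel_pow S P b \<bind> P"
    using Suc by simp
  also have "\<dots> = kernel_pow S P a z \<bind> (\<lambda>w. kernel_pow S P b w \<bind> P)"
    using sets_kernel_pow[OF z] measurable_kernel_pow_subprob measurable_prob_algebraD[OF P]
    by (rule bind_assoc_sets)
  finally show ?case by simp
qed

lemma bind_kernel_pow_add:
  assumes \<mu>: "sets \<mu> = sets S"
  shows "\<mu> \<bind> kernel_pow S P (a + b) = \<mu> \<bind> kernel_pow S P a \<bind> kernel_pow S P b"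
  using \<mu> measurable_kernel_pow_subprob measurable_kernel_pow_subprob
  by (rule bind_assoc_cong[symmetric]) (rule kernel_pow_add[symmetric])

lemma bind_kernel_pow_1:
  assumes \<mu>: "sets \<mu> = sets S"
  shows "\<mu> \<bind> kernel_pow S P 1 = \<mu> \<bind> P"
  using kernel_pow_1 sets_eq_imp_space_eq[OF \<mu>] by (intro bind_cong) auto

lemma bind_kernel_pow_invariant:
  assumes \<mu>: "sets \<mu> = sets S" and inv: "\<mu> \<bind> P = \<mu>"
  shows "\<mu> \<bind> kernel_pow S P n = \<mu>"
proof (induction n)
  case 0
  have "kernel_pow S P 0 = return S" by (rule ext) simp
  then show ?case using \<mu> by (simp add: bind_return'')
next
  case (Suc n)
  have "\<mu> \<bind> kernel_pow S P (Suc n) = \<mu> \<bind> kernel_pow S P n \<bind> kernel_pow S P 1"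
    unfolding Suc_eq_plus1 by (rule bind_kernel_pow_add[OF \<mu>])
  also have "\<dots> = \<mu> \<bind> P"
    by (simp only: Suc.IH bind_kernel_pow_1[OF \<mu>])
  finally show ?case using inv by (rule trans)
qed

end

section \<open>Distance by test functions\<close>

text \<open>A dual form of \<open>tv_dist\<close> (only \<open>tv_dist \<le> test_dist\<close> is needed): the contraction
  argument below works with test functions, not with sets.\<close>

definition unit_test_funs :: "'a measure \<Rightarrow> ('a \<Rightarrow> real) set" where
  "unit_test_funs S = {g \<in> borel_measurable S. \<forall>x\<in>space S. 0 \<le> g x \<and> g x \<le> 1}"

definition test_dist :: "'a measure \<Rightarrow> 'a measure \<Rightarrow> 'a measure \<Rightarrow> real" where
  "test_dist S \<mu> \<nu> = (SUP g\<in>unit_test_funs S. \<bar>(\<integral>x. g x \<partial>\<mu>) - (\<integral>x. g x \<partial>\<nu>)\<bar>)"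

lemma zero_in_unit_test_funs: "(\<lambda>_. 0) \<in> unit_test_funs S"
  by (simp add: unit_test_funs_def)

lemma complement_unit_test_fun: "g \<in> unit_test_funs S \<Longrightarrow> (\<lambda>x. 1 - g x) \<in> unit_test_funs S"
  by (auto simp: unit_test_funs_def)

lemma integrable_unit_test_fun:
  assumes M: "finite_measure M" "sets M = sets S" and g: "g \<in> unit_test_funs S"
  shows "integrable M g"
proof -
  have "g \<in> borel_measurable M"
    using g unfolding unit_test_funs_def measurable_cong_sets[OF M(2) refl] by simp
  then show ?thesis
    using g sets_eq_imp_space_eq[OF M(2)]
    by (intro finite_measure.integrable_const_bound[OF M(1), where B=1] AE_I2)
       (auto simp: unit_test_funs_def)
qed

lemma integral_unit_test_fun_bounds:
  assumes \<mu>: "\<mu> \<in> space (prob_algebra S)" and g: "g \<in> unit_test_funs S"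
  shows "0 \<le> (\<integral>x. g x \<partial>\<mu>)" and "(\<integral>x. g x \<partial>\<mu>) \<le> 1"
proof -
  interpret prob_space \<mu> using \<mu> by (simp add: space_prob_algebra)
  have sets: "sets \<mu> = sets S" using \<mu> by (simp add: space_prob_algebra)
  have bounds: "\<And>x. x \<in> space \<mu> \<Longrightarrow> 0 \<le> g x \<and> g x \<le> 1"
    using g sets_eq_imp_space_eq[OF sets] by (auto simp: unit_test_funs_def)
  show "0 \<le> (\<integral>x. g x \<partial>\<mu>)"
    using bounds by (intro integral_nonneg_AE AE_I2) auto
  have "(\<integral>x. g x \<partial>\<mu>) \<le> (\<integral>x. 1 \<partial>\<mu>)"
    using bounds integrable_unit_test_fun[OF finite_measure_axioms sets g]
    by (intro integral_mono_AE AE_I2) auto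
  then show "(\<integral>x. g x \<partial>\<mu>) \<le> 1" by (simp add: prob_space)
qed

lemma integral_unit_test_fun_mono_measure:
  assumes M: "finite_measure M" "sets M = sets S" and M': "finite_measure M'" "sets M' = sets S"
    and le: "\<And>A. A \<in> sets S \<Longrightarrow> emeasure M A \<le> emeasure M' A"
    and g: "g \<in> unit_test_funs S"
  shows "(\<integral>x. g x \<partial>M) \<le> (\<integral>x. g x \<partial>M')"
proof -
  have space: "space M = space S" "space M' = space S"
    using sets_eq_imp_space_eq[OF M(2)] sets_eq_imp_space_eq[OF M'(2)] by auto
  have g_bounds: "\<And>x. x \<in> space S \<Longrightarrow> 0 \<le> g x \<and> g x \<le> 1"
    using g by (simp add: unit_test_funs_def)
  have "M \<le> M'"
    using M(2) M'(2) le by (rule le_measureI)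
  have "ennreal (\<integral>x. g x \<partial>M) = (\<integral>\<^sup>+x. ennreal (g x) \<partial>M)"
    using g_bounds space integrable_unit_test_fun[OF M g]
    by (intro nn_integral_eq_integral[symmetric] AE_I2) auto
  also have "\<dots> \<le> (\<integral>\<^sup>+x. ennreal (g x) \<partial>M')"
    using \<open>M \<le> M'\<close> M M' by (intro nn_integral_mono_measure) auto
  also have "\<dots> = ennreal (\<integral>x. g x \<partial>M')"
    using g_bounds space integrable_unit_test_fun[OF M' g]
    by (intro nn_integral_eq_integral AE_I2) auto
  moreover have "0 \<le> (\<integral>x. g x \<partial>M')"
    using g_bounds space by (intro integral_nonneg_AE AE_I2) auto
  ultimately show ?thesis by (simp add: ennreal_le_iff)
qed

lemma abs_integral_diff_unit_test_fun_le_1: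
  assumes "\<mu> \<in> space (prob_algebra S)" and "\<nu> \<in> space (prob_algebra S)"
    and "g \<in> unit_test_funs S"
  shows "\<bar>(\<integral>x. g x \<partial>\<mu>) - (\<integral>x. g x \<partial>\<nu>)\<bar> \<le> 1"
  using integral_unit_test_fun_bounds[OF assms(1,3)] integral_unit_test_fun_bounds[OF assms(2,3)]
  by linarith

lemma test_dist_bdd_above:
  assumes "\<mu> \<in> space (prob_algebra S)" and "\<nu> \<in> space (prob_algebra S)"
  shows "bdd_above ((\<lambda>g. \<bar>(\<integral>x. g x \<partial>\<mu>) - (\<integral>x. g x \<partial>\<nu>)\<bar>) ` unit_test_funs S)"
  using abs_integral_diff_unit_test_fun_le_1[OF assms] by (intro bdd_aboveI[where M=1]) auto

lemma abs_integral_diff_le_test_dist: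
  assumes \<mu>: "\<mu> \<in> space (prob_algebra S)" and \<nu>: "\<nu> \<in> space (prob_algebra S)"
    and g: "g \<in> unit_test_funs S"
  shows "\<bar>(\<integral>x. g x \<partial>\<mu>) - (\<integral>x. g x \<partial>\<nu>)\<bar> \<le> test_dist S \<mu> \<nu>"
  unfolding test_dist_def by (rule cSUP_upper[OF g test_dist_bdd_above[OF \<mu> \<nu>]])

lemma test_dist_le_1:
  assumes \<mu>: "\<mu> \<in> space (prob_algebra S)" and \<nu>: "\<nu> \<in> space (prob_algebra S)"
  shows "test_dist S \<mu> \<nu> \<le> 1"
  unfolding test_dist_def
proof (rule cSUP_least)
  show "unit_test_funs S \<noteq> {}" using zero_in_unit_test_funs by blast
  fix g assume "g \<in> unit_test_funs S"
  then show "\<bar>(\<integral>x. g x \<partial>\<mu>) - (\<integral>x. g x \<partial>\<nu>)\<bar> \<le> 1"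
    by (rule abs_integral_diff_unit_test_fun_le_1[OF \<mu> \<nu>])
qed

lemma tv_dist_le_test_dist:
  assumes \<mu>: "\<mu> \<in> space (prob_algebra S)" and \<nu>: "\<nu> \<in> space (prob_algebra S)"
  shows "tv_dist \<mu> \<nu> \<le> test_dist S \<mu> \<nu>"
  unfolding tv_dist_def
proof (rule cSUP_least)
  show "sets \<mu> \<noteq> {}" by auto
  fix A assume A: "A \<in> sets \<mu>"
  interpret \<mu>: prob_space \<mu> using \<mu> by (simp add: space_prob_algebra)
  interpret \<nu>: prob_space \<nu> using \<nu> by (simp add: space_prob_algebra)
  have sets: "sets \<mu> = sets S" "sets \<nu> = sets S" using \<mu> \<nu> by (auto simp: space_prob_algebra)
  have "(indicator A :: _ \<Rightarrow> real) \<in> unit_test_funs S"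
    using A sets by (auto simp: unit_test_funs_def indicator_def)
  from abs_integral_diff_le_test_dist[OF \<mu> \<nu> this] A sets
  show "\<bar>measure \<mu> A - measure \<nu> A\<bar> \<le> test_dist S \<mu> \<nu>" by simp
qed

lemma tv_dist_le_0_imp_eq:
  assumes "prob_space \<mu>" and "prob_space \<nu>" and "sets \<mu> = sets \<nu>" and d: "tv_dist \<mu> \<nu> \<le> 0"
  shows "\<mu> = \<nu>"
proof (rule measure_eqI)
  interpret \<mu>: prob_space \<mu> by fact
  interpret \<nu>: prob_space \<nu> by fact
  show "sets \<mu> = sets \<nu>" by fact
  fix A assume A: "A \<in> sets \<mu>"
  have "\<bar>measure \<mu> B - measure \<nu> B\<bar> \<le> 1" for B
    using \<mu>.prob_le_1[of B] \<nu>.prob_le_1[of B] measure_nonneg[of \<mu> B] measure_nonneg[of \<nu> B]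
    by linarith
  then have "bdd_above ((\<lambda>A. \<bar>measure \<mu> A - measure \<nu> A\<bar>) ` sets \<mu>)"
    by (intro bdd_aboveI[where M=1]) auto
  then have "\<bar>measure \<mu> A - measure \<nu> A\<bar> \<le> tv_dist \<mu> \<nu>"
    unfolding tv_dist_def by (rule cSUP_upper[OF A])
  with d show "emeasure \<mu> A = emeasure \<nu> A"
    by (simp add: \<mu>.emeasure_eq_measure \<nu>.emeasure_eq_measure)
qed

section \<open>Doeblin's theorem\<close>

lemma power_div_le_root_power:
  fixes q :: real
  assumes q: "0 < q" "q \<le> 1" and m: "0 < m"
  shows "q ^ (n div m) \<le> root m q ^ n / q"
proof -
  have "0 < root m q" "root m q \<le> 1" "root m q ^ m = q"
    using q m by (auto simp: real_root_pow_pos2)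
  moreover have "n \<le> m * (n div m) + m"
    using m by (metis add_le_mono div_mult_mod_eq le_refl less_imp_le_nat mod_less_divisor mult.commute)
  ultimately have "root m q ^ (m * (n div m) + m) \<le> root m q ^ n"
    by (intro power_decreasing) auto
  also have "root m q ^ (m * (n div m) + m) = q ^ (n div m) * q"
    using \<open>root m q ^ m = q\<close> by (simp add: power_add power_mult)
  finally show ?thesis using q(1) by (simp only: pos_le_divide_eq)
qed

lemma nn_integral_geometric_pmf_unfold:
  fixes f :: "nat \<Rightarrow> ennreal"
  assumes p: "0 < p" "p \<le> 1"
  shows "(\<integral>\<^sup>+k. f k \<partial>measure_pmf (geometric_pmf p))
    = ennreal p * f 0 + (\<integral>\<^sup>+k. ennreal (1 - p) * f (Suc k) \<partial>measure_pmf (geometric_pmf p))"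
proof -
  let ?w = "\<lambda>k. ennreal (pmf (geometric_pmf p) k)"
  have w_Suc: "?w (Suc k) = ennreal (1 - p) * ?w k" for k
    using p by (simp flip: ennreal_mult)
  have split_head: "(\<Sum>k. g k) = g 0 + (\<Sum>k. g (Suc k))" for g :: "nat \<Rightarrow> ennreal"
    using sums_unique[OF sums_Suc[OF summable_sums[OF summableI[of "\<lambda>k. g (Suc k)"]]]]
    by (simp add: add.commute)
  have "(\<integral>\<^sup>+k. f k \<partial>measure_pmf (geometric_pmf p)) = (\<Sum>k. ?w k * f k)"
    by (simp add: nn_integral_measure_pmf nn_integral_count_space_nat)
  also have "\<dots> = ?w 0 * f 0 + (\<Sum>k. ?w k * (ennreal (1 - p) * f (Suc k)))"
    by (subst split_head) (simp only: w_Suc mult.assoc mult.left_commute)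
  also have "(\<Sum>k. ?w k * (ennreal (1 - p) * f (Suc k)))
      = (\<integral>\<^sup>+k. ennreal (1 - p) * f (Suc k) \<partial>measure_pmf (geometric_pmf p))"
    by (simp add: nn_integral_measure_pmf nn_integral_count_space_nat)
  finally show ?thesis using p by simp
qed

locale doeblin =
  fixes S :: "'a measure" and P :: "'a \<Rightarrow> 'a measure" and m :: nat and c :: real
    and \<nu> :: "'a measure"
  assumes P: "P \<in> S \<rightarrow>\<^sub>M prob_algebra S" and m: "0 < m" and c: "0 < c" "c < 1"
    and sets_nu: "sets \<nu> = sets S" and emeasure_nu_space: "emeasure \<nu> (space S) = ennreal c"
    and minor: "\<And>z A. z \<in> space S \<Longrightarrow> A \<in> sets S \<Longrightarrow> emeasure \<nu> A \<le> emeasure (kernel_pow S P m z) A"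
begin

abbreviation "Pm \<equiv> kernel_pow S P m"

lemma space_nu: "space \<nu> = space S"
  using sets_eq_imp_space_eq[OF sets_nu] .

lemma finite_measure_nu: "finite_measure \<nu>"
  by (rule finite_measureI) (simp add: space_nu emeasure_nu_space)

lemma Pm_in_prob_algebra: "z \<in> space S \<Longrightarrow> Pm z \<in> space (prob_algebra S)"
  by (rule kernel_pow_in_prob_algebra[OF P])

lemma integral_Pm_minus_nu_bounds:
  assumes z: "z \<in> space S" and g: "g \<in> unit_test_funs S"
  shows "0 \<le> (\<integral>x. g x \<partial>Pm z) - (\<integral>x. g x \<partial>\<nu>)"
    and "(\<integral>x. g x \<partial>Pm z) - (\<integral>x. g x \<partial>\<nu>) \<le> 1 - c"
proof -
  interpret Pm: prob_space "Pm z" using Pm_in_prob_algebra[OF z] by (simp add: space_prob_algebra)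
  have mono: "(\<integral>x. f x \<partial>\<nu>) \<le> (\<integral>x. f x \<partial>Pm z)" if "f \<in> unit_test_funs S" for f
    by (rule integral_unit_test_fun_mono_measure[OF finite_measure_nu sets_nu
          Pm.finite_measure_axioms sets_kernel_pow[OF P z] _ that]) (rule minor[OF z])
  show "0 \<le> (\<integral>x. g x \<partial>Pm z) - (\<integral>x. g x \<partial>\<nu>)"
    using mono[OF g] by simp
  have "(\<integral>x. 1 - g x \<partial>\<nu>) = c - (\<integral>x. g x \<partial>\<nu>)"
    using integrable_unit_test_fun[OF finite_measure_nu sets_nu g] emeasure_nu_space c
    by (simp add: finite_measure.integrable_const[OF finite_measure_nu] space_nu measure_def)
  moreover have "(\<integral>x. 1 - g x \<partial>Pm z) = 1 - (\<integral>x. g x \<partial>Pm z)"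
    using integrable_unit_test_fun[OF Pm.finite_measure_axioms sets_kernel_pow[OF P z] g]
    by (simp add: Pm.prob_space)
  ultimately show "(\<integral>x. g x \<partial>Pm z) - (\<integral>x. g x \<partial>\<nu>) \<le> 1 - c"
    using mono[OF complement_unit_test_fun[OF g]] by simp
qed

lemma integral_bind_Pm:
  assumes \<mu>: "\<mu> \<in> space (prob_algebra S)" and g: "g \<in> unit_test_funs S"
  shows "(\<integral>x. g x \<partial>(\<mu> \<bind> Pm)) = (\<integral>z. (\<integral>x. g x \<partial>Pm z) \<partial>\<mu>)"
proof -
  interpret prob_space \<mu> using \<mu> by (simp add: space_prob_algebra)
  have sets: "sets \<mu> = sets S" using \<mu> by (simp add: space_prob_algebra)
  show ?thesis
  proof (rule integral_bind[OF _ _ _ finite_measure_axioms, where B=1 and B'=1])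
    show "g \<in> borel_measurable S" using g by (simp add: unit_test_funs_def)
    show "\<And>x. x \<in> space S \<Longrightarrow> \<bar>g x\<bar> \<le> 1" using g by (auto simp: unit_test_funs_def)
    show "Pm \<in> \<mu> \<rightarrow>\<^sub>M subprob_algebra S"
      using measurable_kernel_pow_subprob[OF P] by (simp cong: measurable_cong_sets[OF sets refl])
    show "AE x in \<mu>. emeasure (Pm x) (space (Pm x)) \<le> ennreal 1"
      using Pm_in_prob_algebra sets_eq_imp_space_eq[OF sets]
      by (intro AE_I2) (simp add: space_prob_algebra prob_space.emeasure_space_1)
  qed
qed

text \<open>The coupling idea: \<open>Pm z\<close> shares the mass \<open>c\<close> of \<open>\<nu>\<close> for every \<open>z\<close>, so the
  difference of two \<open>Pm\<close>-images only sees the rescaled test function \<open>h\<close> below.\<close>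

lemma test_dist_bind_Pm_contract:
  assumes \<mu>: "\<mu> \<in> space (prob_algebra S)" and \<mu>': "\<mu>' \<in> space (prob_algebra S)"
  shows "test_dist S (\<mu> \<bind> Pm) (\<mu>' \<bind> Pm) \<le> (1 - c) * test_dist S \<mu> \<mu>'"
  unfolding test_dist_def[of S "\<mu> \<bind> Pm"]
proof (rule cSUP_least)
  show "unit_test_funs S \<noteq> {}" using zero_in_unit_test_funs by blast
  fix g assume g: "g \<in> unit_test_funs S"
  define a where "a = (\<integral>x. g x \<partial>\<nu>)"
  define h where "h z = ((\<integral>x. g x \<partial>Pm z) - a) / (1 - c)" for z
  have h: "h \<in> unit_test_funs S"
  proof -
    have "(\<lambda>z. \<integral>x. g x \<partial>Pm z) \<in> borel_measurable S"
      using g measurable_kernel_pow_subprob[OF P]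
      by (intro measurable_compose[OF _ integral_measurable_subprob_algebra]) (auto simp: unit_test_funs_def)
    then have "h \<in> borel_measurable S" unfolding h_def by measurable
    moreover have "0 \<le> h z \<and> h z \<le> 1" if "z \<in> space S" for z
      using integral_Pm_minus_nu_bounds[OF that g] c by (auto simp: h_def a_def field_simps)
    ultimately show ?thesis by (simp add: unit_test_funs_def)
  qed
  have affine: "(\<integral>x. g x \<partial>(\<rho> \<bind> Pm)) = (1 - c) * (\<integral>z. h z \<partial>\<rho>) + a"
    if \<rho>: "\<rho> \<in> space (prob_algebra S)" for \<rho>
  proof -
    interpret prob_space \<rho> using \<rho> by (simp add: space_prob_algebra)
    have "(\<integral>x. g x \<partial>(\<rho> \<bind> Pm)) = (\<integral>z. (1 - c) * h z + a \<partial>\<rho>)"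
      using c by (simp add: integral_bind_Pm[OF \<rho> g] h_def)
    also have "\<dots> = (1 - c) * (\<integral>z. h z \<partial>\<rho>) + a"
      using integrable_unit_test_fun[OF finite_measure_axioms _ h] \<rho>
      by (simp add: prob_space space_prob_algebra)
    finally show ?thesis .
  qed
  have "\<bar>(\<integral>x. g x \<partial>(\<mu> \<bind> Pm)) - (\<integral>x. g x \<partial>(\<mu>' \<bind> Pm))\<bar>
      = (1 - c) * \<bar>(\<integral>z. h z \<partial>\<mu>) - (\<integral>z. h z \<partial>\<mu>')\<bar>"
    using affine[OF \<mu>] affine[OF \<mu>'] c by (simp add: abs_mult right_diff_distrib[symmetric])
  also have "\<dots> \<le> (1 - c) * test_dist S \<mu> \<mu>'"
    using abs_integral_diff_le_test_dist[OF \<mu> \<mu>' h] c by (intro mult_left_mono) auto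
  finally show "\<bar>(\<integral>x. g x \<partial>(\<mu> \<bind> Pm)) - (\<integral>x. g x \<partial>(\<mu>' \<bind> Pm))\<bar> \<le> (1 - c) * test_dist S \<mu> \<mu>'" .
qed

text \<open>Regeneration: \<open>Pm z = \<nu> + (1 - c) \<cdot> residual z\<close>, so a \<open>Pm\<close>-chain restarts from
  \<open>\<nu> / c\<close> after a geometric number of residual steps, and its invariant law is the mixture
  \<open>\<Sum>\<^sub>k c (1 - c)\<^sup>k (\<nu> / c) residual\<^sup>k\<close>.\<close>

definition "residual z = scale_measure (ennreal (1 / (1 - c))) (diff_measure (Pm z) \<nu>)"
definition "nu_normalized = scale_measure (ennreal (1 / c)) \<nu>"
definition "residual_iter k = nu_normalized \<bind> kernel_pow S residual k"
definition "stationary = measure_pmf (geometric_pmf c) \<bind> residual_iter"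

lemma sets_residual: "z \<in> space S \<Longrightarrow> sets (residual z) = sets S"
  using sets_kernel_pow[OF P] by (simp add: residual_def)

lemma emeasure_residual:
  assumes z: "z \<in> space S" and A: "A \<in> sets S"
  shows "emeasure (residual z) A = ennreal (1 / (1 - c)) * (emeasure (Pm z) A - emeasure \<nu> A)"
proof -
  interpret Pm: prob_space "Pm z" using Pm_in_prob_algebra[OF z] by (simp add: space_prob_algebra)
  have "emeasure (diff_measure (Pm z) \<nu>) A = emeasure (Pm z) A - emeasure \<nu> A"
    using sets_kernel_pow[OF P z] sets_nu minor[OF z] A
    by (intro emeasure_diff_measure Pm.finite_measure_axioms finite_measure_nu) auto
  then show ?thesis by (simp add: residual_def)
qed

lemma emeasure_Pm_split:
  assumes z: "z \<in> space S" and A: "A \<in> sets S"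
  shows "emeasure (Pm z) A = emeasure \<nu> A + ennreal (1 - c) * emeasure (residual z) A"
proof -
  have "ennreal (1 - c) * ennreal (1 / (1 - c)) = 1"
    using c by (simp flip: ennreal_mult)
  then have "ennreal (1 - c) * emeasure (residual z) A = emeasure (Pm z) A - emeasure \<nu> A"
    unfolding emeasure_residual[OF z A] by (simp add: mult.assoc[symmetric])
  then show ?thesis
    by (simp add: add_diff_inverse_ennreal[OF minor[OF z A]])
qed

lemma prob_space_residual:
  assumes z: "z \<in> space S"
  shows "prob_space (residual z)"
proof
  have "emeasure (residual z) (space S) = ennreal (1 / (1 - c)) * (1 - ennreal c)"
    using emeasure_residual[OF z sets.top] emeasure_nu_space
      in_space_prob_algebra[OF Pm_in_prob_algebra[OF z]] by simp
  also have "\<dots> = 1"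
    using c by (simp add: ennreal_minus flip: ennreal_1 ennreal_mult)
  finally show "emeasure (residual z) (space (residual z)) = 1"
    using sets_eq_imp_space_eq[OF sets_residual[OF z]] by simp
qed

lemma measurable_residual: "residual \<in> S \<rightarrow>\<^sub>M prob_algebra S"
proof (rule measurable_prob_algebraI)
  show "residual \<in> S \<rightarrow>\<^sub>M subprob_algebra S"
  proof (rule measurable_subprob_algebra)
    fix A assume A: "A \<in> sets S"
    have "(\<lambda>z. ennreal (1 / (1 - c)) * (emeasure (Pm z) A - emeasure \<nu> A)) \<in> borel_measurable S"
      using measurable_emeasure_kernel[OF measurable_kernel_pow_subprob[OF P] A] by measurable
    then show "(\<lambda>z. emeasure (residual z) A) \<in> borel_measurable S"
      by (rule measurable_cong[THEN iffD1, rotated]) (simp add: emeasure_residual[OF _ A])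
  qed (auto simp: sets_residual prob_space_residual prob_space_imp_subprob_space)
qed (rule prob_space_residual)

lemma nu_normalized_in_prob_algebra: "nu_normalized \<in> space (prob_algebra S)"
proof -
  have "emeasure nu_normalized (space nu_normalized) = 1"
    using c by (simp add: nu_normalized_def space_scale_measure space_nu emeasure_nu_space
        flip: ennreal_mult)
  then show ?thesis by (simp add: space_prob_algebra nu_normalized_def sets_nu prob_spaceI)
qed

lemma residual_iter_in_prob_algebra: "residual_iter k \<in> space (prob_algebra S)"
  unfolding residual_iter_def
  by (rule bind_in_space_prob_algebra[OF nu_normalized_in_prob_algebra measurable_kernel_pow[OF measurable_residual]])

lemma residual_iter_0: "residual_iter 0 = nu_normalized"
proof -
  have "kernel_pow S residual 0 = return S" by (rule ext) simp
  then show ?thesis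
    using nu_normalized_in_prob_algebra by (simp add: residual_iter_def bind_return'' space_prob_algebra)
qed

lemma residual_iter_Suc: "residual_iter (Suc k) = residual_iter k \<bind> residual"
proof -
  have "kernel_pow S residual (Suc k) = (\<lambda>x. kernel_pow S residual k x \<bind> residual)"
    by (rule ext) simp
  moreover have "sets nu_normalized = sets S"
    using nu_normalized_in_prob_algebra by (simp add: space_prob_algebra)
  ultimately show ?thesis
    using bind_assoc_sets[OF _ measurable_kernel_pow_subprob[OF measurable_residual]
        measurable_prob_algebraD[OF measurable_residual]]
    by (simp add: residual_iter_def)
qed

lemma measurable_residual_iter: "residual_iter \<in> measure_pmf (geometric_pmf c) \<rightarrow>\<^sub>M prob_algebra S"
  using residual_iter_in_prob_algebra by simp

lemma stationary_in_prob_algebra: "stationary \<in> space (prob_algebra S)"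
  unfolding stationary_def
  by (rule bind_in_space_prob_algebra[OF _ measurable_residual_iter])
     (simp add: space_prob_algebra prob_space_measure_pmf)

lemma nn_integral_Pm_residual_iter:
  assumes A: "A \<in> sets S"
  shows "(\<integral>\<^sup>+z. emeasure (Pm z) A \<partial>residual_iter k)
    = emeasure \<nu> A + ennreal (1 - c) * emeasure (residual_iter (Suc k)) A"
proof -
  interpret prob_space "residual_iter k"
    using residual_iter_in_prob_algebra by (simp add: space_prob_algebra)
  have sets: "sets (residual_iter k) = sets S"
    using residual_iter_in_prob_algebra by (simp add: space_prob_algebra)
  have "(\<integral>\<^sup>+z. emeasure (Pm z) A \<partial>residual_iter k)
      = (\<integral>\<^sup>+z. emeasure \<nu> A + ennreal (1 - c) * emeasure (residual z) A \<partial>residual_iter k)"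
    using sets_eq_imp_space_eq[OF sets] by (intro nn_integral_cong) (simp add: emeasure_Pm_split[OF _ A])
  also have "\<dots> = emeasure \<nu> A + ennreal (1 - c) * (\<integral>\<^sup>+z. emeasure (residual z) A \<partial>residual_iter k)"
    using measurable_emeasure_kernel[OF measurable_prob_algebraD[OF measurable_residual] A]
    by (simp add: nn_integral_add nn_integral_cmult emeasure_space_1 cong: measurable_cong_sets[OF sets refl])
  also have "(\<integral>\<^sup>+z. emeasure (residual z) A \<partial>residual_iter k) = emeasure (residual_iter (Suc k)) A"
    unfolding residual_iter_Suc
    by (rule emeasure_bind_prob_algebra[OF residual_iter_in_prob_algebra measurable_residual A, symmetric])
  finally show ?thesis .
qed

lemma stationary_Pm_invariant: "stationary \<bind> Pm = stationary"
proof (rule measure_eqI)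
  have sets: "sets (stationary \<bind> Pm) = sets S"
    using sets_bind'[OF stationary_in_prob_algebra measurable_kernel_pow[OF P]] .
  then show "sets (stationary \<bind> Pm) = sets stationary"
    using stationary_in_prob_algebra by (simp add: space_prob_algebra)
  fix A assume "A \<in> sets (stationary \<bind> Pm)"
  then have A: "A \<in> sets S" using sets by simp
  have "emeasure (stationary \<bind> Pm) A = (\<integral>\<^sup>+z. emeasure (Pm z) A \<partial>stationary)"
    by (rule emeasure_bind_prob_algebra[OF stationary_in_prob_algebra measurable_kernel_pow[OF P] A])
  also have "\<dots> = (\<integral>\<^sup>+k. \<integral>\<^sup>+z. emeasure (Pm z) A \<partial>residual_iter k \<partial>measure_pmf (geometric_pmf c))"
    unfolding stationary_def
    by (rule nn_integral_bind[OF measurable_emeasure_kernel[OF measurable_kernel_pow_subprob[OF P] A]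
          measurable_prob_algebraD[OF measurable_residual_iter]])
  also have "\<dots> = (\<integral>\<^sup>+k. emeasure \<nu> A + ennreal (1 - c) * emeasure (residual_iter (Suc k)) A
      \<partial>measure_pmf (geometric_pmf c))"
    by (simp only: nn_integral_Pm_residual_iter[OF A])
  also have "\<dots> = emeasure \<nu> A
      + (\<integral>\<^sup>+k. ennreal (1 - c) * emeasure (residual_iter (Suc k)) A \<partial>measure_pmf (geometric_pmf c))"
    by (simp add: nn_integral_add measure_pmf.emeasure_space_1)
  also have "\<dots> = (\<integral>\<^sup>+k. emeasure (residual_iter k) A \<partial>measure_pmf (geometric_pmf c))"
  proof -
    have "emeasure \<nu> A = ennreal c * emeasure (residual_iter 0) A"
      using c by (simp add: residual_iter_0 nu_normalized_def mult.assoc[symmetric] flip: ennreal_mult)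
    then show ?thesis
      using nn_integral_geometric_pmf_unfold[of c "\<lambda>k. emeasure (residual_iter k) A"] c by simp
  qed
  also have "\<dots> = emeasure stationary A"
    unfolding stationary_def
    by (rule emeasure_bind_prob_algebra[OF _ measurable_residual_iter A, symmetric])
       (simp add: space_prob_algebra prob_space_measure_pmf)
  finally show "emeasure (stationary \<bind> Pm) A = emeasure stationary A" .
qed

lemma Pm_invariant_unique:
  assumes \<mu>: "\<mu> \<in> space (prob_algebra S)" and inv: "\<mu> \<bind> Pm = \<mu>"
  shows "\<mu> = stationary"
proof -
  have "test_dist S \<mu> stationary \<le> (1 - c) * test_dist S \<mu> stationary"
    using test_dist_bind_Pm_contract[OF \<mu> stationary_in_prob_algebra]
    unfolding inv stationary_Pm_invariant .
  then have "c * test_dist S \<mu> stationary \<le> 0"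
    by (simp add: algebra_simps)
  then have "test_dist S \<mu> stationary \<le> 0"
    using c by (simp add: mult_le_0_iff)
  then have "tv_dist \<mu> stationary \<le> 0"
    using tv_dist_le_test_dist[OF \<mu> stationary_in_prob_algebra] by simp
  then show ?thesis
    using \<mu> stationary_in_prob_algebra by (intro tv_dist_le_0_imp_eq) (auto simp: space_prob_algebra)
qed

lemma stationary_invariant: "stationary \<bind> P = stationary"
proof -
  have sets: "sets stationary = sets S"
    using stationary_in_prob_algebra by (simp add: space_prob_algebra)
  have "stationary \<bind> P \<bind> Pm = stationary \<bind> kernel_pow S P 1 \<bind> Pm"
    by (simp only: bind_kernel_pow_1[OF P sets])
  also have "\<dots> = stationary \<bind> kernel_pow S P (m + 1)"
    by (simp only: add.commute[of m 1] bind_kernel_pow_add[OF P sets])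
  also have "\<dots> = stationary \<bind> P"
    by (simp only: bind_kernel_pow_add[OF P sets] stationary_Pm_invariant bind_kernel_pow_1[OF P sets])
  finally show ?thesis
    using Pm_invariant_unique[OF bind_in_space_prob_algebra[OF stationary_in_prob_algebra P]] by simp
qed

lemma test_dist_kernel_pow_stationary:
  assumes z: "z \<in> space S"
  shows "test_dist S (kernel_pow S P (r + k * m) z) stationary \<le> (1 - c) ^ k"
proof (induction k)
  case 0
  show ?case using test_dist_le_1[OF kernel_pow_in_prob_algebra[OF P z] stationary_in_prob_algebra] by simp
next
  case (Suc k)
  have "r + Suc k * m = (r + k * m) + m" by simp
  then have "kernel_pow S P (r + Suc k * m) z = kernel_pow S P (r + k * m) z \<bind> Pm"
    by (simp only: kernel_pow_add[OF P z])
  then have "test_dist S (kernel_pow S P (r + Suc k * m) z) stationary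
      = test_dist S (kernel_pow S P (r + k * m) z \<bind> Pm) (stationary \<bind> Pm)"
    by (simp only: stationary_Pm_invariant)
  also have "\<dots> \<le> (1 - c) * test_dist S (kernel_pow S P (r + k * m) z) stationary"
    by (rule test_dist_bind_Pm_contract[OF kernel_pow_in_prob_algebra[OF P z] stationary_in_prob_algebra])
  also have "\<dots> \<le> (1 - c) * (1 - c) ^ k"
    using Suc c by (intro mult_left_mono) auto
  finally show ?case by simp
qed

theorem doeblin_exp_ergodic: "exp_ergodic S P"
  unfolding exp_ergodic_def
proof (intro exI conjI allI impI)
  show "prob_space stationary" "sets stationary = sets S"
    using stationary_in_prob_algebra by (auto simp: space_prob_algebra)
  show "stationary \<bind> P = stationary" by (rule stationary_invariant)
  fix \<mu> assume "prob_space \<mu> \<and> sets \<mu> = sets S \<and> \<mu> \<bind> P = \<mu>"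
  then show "\<mu> = stationary"
    using Pm_invariant_unique bind_kernel_pow_invariant[OF P] by (auto simp: space_prob_algebra)
next
  show "0 \<le> root m (1 - c)" "root m (1 - c) < 1" using c m by auto
  show "\<forall>z\<in>space S. \<exists>C. \<forall>n. tv_dist (kernel_pow S P n z) stationary \<le> C * root m (1 - c) ^ n"
  proof (intro ballI exI allI)
    fix z n assume z: "z \<in> space S"
    have "tv_dist (kernel_pow S P n z) stationary \<le> test_dist S (kernel_pow S P (n mod m + n div m * m) z) stationary"
      using tv_dist_le_test_dist[OF kernel_pow_in_prob_algebra[OF P z] stationary_in_prob_algebra] by simp
    also have "\<dots> \<le> (1 - c) ^ (n div m)" by (rule test_dist_kernel_pow_stationary[OF z])
    also have "\<dots> \<le> root m (1 - c) ^ n / (1 - c)" using c m by (intro power_div_le_root_power) auto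
    finally show "tv_dist (kernel_pow S P n z) stationary \<le> 1 / (1 - c) * root m (1 - c) ^ n" by simp
  qed
qed

end

theorem exp_ergodic_if_minorized:
  assumes P: "P \<in> S \<rightarrow>\<^sub>M prob_algebra S" and m: "0 < m"
    and sets_nu: "sets \<nu> = sets S" and nu_nonzero: "emeasure \<nu> (space S) \<noteq> 0"
    and minor: "\<And>z A. z \<in> space S \<Longrightarrow> A \<in> sets S \<Longrightarrow> emeasure \<nu> A \<le> emeasure (kernel_pow S P m z) A"
  shows "exp_ergodic S P"
proof -
  obtain z where z: "z \<in> space S"
    using nu_nonzero sets_eq_imp_space_eq[OF sets_nu] by fastforce
  have "emeasure \<nu> (space S) \<le> 1"
    using minor[OF z sets.top] in_space_prob_algebra[OF kernel_pow_in_prob_algebra[OF P z]] by simp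
  then obtain r where r: "emeasure \<nu> (space S) = ennreal r" "0 < r" "r \<le> 1"
    using nu_nonzero by (cases "emeasure \<nu> (space S)") (auto simp: ennreal_le_iff2 top_unique)
  \<comment> \<open>halving keeps the residual mass \<open>1 - r / 2\<close> positive\<close>
  interpret doeblin S P m "r / 2" "scale_measure (ennreal (1 / 2)) \<nu>"
  proof
    have "emeasure (scale_measure (ennreal (1 / 2)) \<nu>) (space S) = ennreal (1 / 2) * ennreal r"
      by (simp only: emeasure_scale_measure r(1))
    also have "\<dots> = ennreal (r / 2)"
      using r by (subst ennreal_mult[symmetric]) auto
    finally show "emeasure (scale_measure (ennreal (1 / 2)) \<nu>) (space S) = ennreal (r / 2)" .
    fix z A assume "z \<in> space S" "A \<in> sets S"
    moreover have "ennreal (1 / 2) * emeasure \<nu> A \<le> emeasure \<nu> A"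
      using mult_right_mono[OF ennreal_leI[of "1 / 2" 1], of "emeasure \<nu> A"] by simp
    ultimately show "emeasure (scale_measure (ennreal (1 / 2)) \<nu>) A \<le> emeasure (kernel_pow S P m z) A"
      using minor by (auto intro: order.trans)
  qed (use P m r sets_nu in auto)
  show ?thesis by (rule doeblin_exp_ergodic)
qed

section \<open>The finite-memory chain\<close>

type_synonym ('y, 'u) memory = "(nat \<Rightarrow> 'y) \<times> (nat \<Rightarrow> 'u)"
type_synonym ('y, 'x, 'u) fm_state = "('y, 'u) memory \<times> 'x \<times> 'u"

lemma space_bspace [simp]: "space (bspace X) = X"
  by (simp add: bspace_def space_restrict_space)

lemma space_mem_space:
  "space (mem_space N MY MU) = (PiE {..N} (\<lambda>_. space MY)) \<times> (PiE {1..N} (\<lambda>_. space MU))"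
  by (simp add: mem_space_def space_pair_measure space_PiM)

lemma measurable_mem_shift [measurable]:
  assumes [measurable]: "f \<in> M \<rightarrow>\<^sub>M mem_space N MY MU" "g \<in> M \<rightarrow>\<^sub>M MY" "k \<in> M \<rightarrow>\<^sub>M MU"
  shows "(\<lambda>w. mem_shift N (f w) (g w) (k w)) \<in> M \<rightarrow>\<^sub>M mem_space N MY MU"
proof -
  have [measurable]: "(\<lambda>w. fst (f w)) \<in> M \<rightarrow>\<^sub>M PiM {..N} (\<lambda>_. MY)"
      "(\<lambda>w. snd (f w)) \<in> M \<rightarrow>\<^sub>M PiM {1..N} (\<lambda>_. MU)"
    using assms(1) unfolding mem_space_def by measurable
  show ?thesis
    unfolding mem_shift_def mem_space_def
  proof (intro measurable_Pair measurable_restrict)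
    fix i assume "i \<in> {..N}"
    then have "i \<noteq> 0 \<Longrightarrow> i - 1 \<in> {..N}" by auto
    then show "(\<lambda>w. if i = 0 then g w else fst (f w) (i - 1)) \<in> M \<rightarrow>\<^sub>M MY"
      by (cases "i = 0") auto
  next
    fix j assume "j \<in> {1..N}"
    then have "j \<noteq> 1 \<Longrightarrow> j - 1 \<in> {1..N}" by auto
    then show "(\<lambda>w. if j = 1 then k w else snd (f w) (j - 1)) \<in> M \<rightarrow>\<^sub>M MU"
      by (cases "j = 1") auto
  qed
qed

text \<open>\<open>mem_graft N k z h\<close> is the memory reached after \<open>k + 1\<close> steps from the state \<open>z\<close>
  when the \<open>k + 1\<close> newest observations and the \<open>k\<close> newest actions are those recorded in \<open>h\<close>:
  the older entries still come from \<open>z\<close>, the action at lag \<open>k + 1\<close> being the action of \<open>z\<close>.\<close>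

definition mem_graft :: "nat \<Rightarrow> nat \<Rightarrow> ('y, 'x, 'u) fm_state \<Rightarrow> ('y, 'u) memory \<Rightarrow> ('y, 'u) memory" where
  "mem_graft N k z h =
     ((\<lambda>i\<in>{..N}. if i \<le> k then fst h i else fst (fst z) (i - Suc k)),
      (\<lambda>j\<in>{1..N}. if j \<le> k then snd h j else if j = Suc k then snd (snd z) else snd (fst z) (j - Suc k)))"

lemma measurable_mem_graft:
  assumes f: "f \<in> M \<rightarrow>\<^sub>M mem_space N MY MU"
    and z: "fst z \<in> space (mem_space N MY MU)" "snd (snd z) \<in> space MU"
  shows "(\<lambda>w. mem_graft N k z (f w)) \<in> M \<rightarrow>\<^sub>M mem_space N MY MU"
proof -
  have [measurable]: "(\<lambda>w. fst (f w)) \<in> M \<rightarrow>\<^sub>M PiM {..N} (\<lambda>_. MY)"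
      "(\<lambda>w. snd (f w)) \<in> M \<rightarrow>\<^sub>M PiM {1..N} (\<lambda>_. MU)"
    using f unfolding mem_space_def by measurable
  have z_mem: "fst (fst z) \<in> PiE {..N} (\<lambda>_. space MY)" "snd (fst z) \<in> PiE {1..N} (\<lambda>_. space MU)"
    using z(1) by (auto simp: space_mem_space)
  show ?thesis
    unfolding mem_graft_def mem_space_def
  proof (intro measurable_Pair measurable_restrict)
    fix i assume "i \<in> {..N}"
    then show "(\<lambda>w. if i \<le> k then fst (f w) i else fst (fst z) (i - Suc k)) \<in> M \<rightarrow>\<^sub>M MY"
      using PiE_mem[OF z_mem(1), of "i - Suc k"] by (cases "i \<le> k") auto
  next
    fix j assume j: "j \<in> {1..N}"
    have "snd (fst z) (j - Suc k) \<in> space MU" if "\<not> j \<le> k" "j \<noteq> Suc k"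
    proof -
      have "j - Suc k \<in> {1..N}" using j that by auto
      then show ?thesis using PiE_mem[OF z_mem(2)] by blast
    qed
    with j show "(\<lambda>w. if j \<le> k then snd (f w) j else if j = Suc k then snd (snd z) else snd (fst z) (j - Suc k))
        \<in> M \<rightarrow>\<^sub>M MU"
      using z(2) by (cases "j \<le> k") auto
  qed
qed

lemma mem_graft_0_mem_shift: "mem_graft N 0 z (mem_shift N h y u) = mem_shift N (fst z) y (snd (snd z))"
  by (auto simp: mem_graft_def mem_shift_def fun_eq_iff restrict_def)

lemma mem_graft_Suc_mem_shift:
  "mem_graft N (Suc k) z (mem_shift N h y u) = mem_shift N (mem_graft N k z h) y u"
  by (auto simp: mem_graft_def mem_shift_def fun_eq_iff restrict_def Suc_diff_le)

lemma mem_graft_self: "h \<in> space (mem_space N MY MU) \<Longrightarrow> mem_graft N N z h = h"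
  by (cases h) (auto simp: mem_graft_def space_mem_space fun_eq_iff restrict_def PiE_def extensional_def)

locale minorized_fm_pomdp =
  fixes X :: "'x::euclidean_space set" and Y :: "'y::euclidean_space set"
    and U :: "'u::euclidean_space set" and N :: nat
    and T :: "'x \<times> 'u \<Rightarrow> 'x measure" and Obs :: "'x \<Rightarrow> 'y measure"
    and \<gamma> :: "('y, 'u) memory \<Rightarrow> 'u measure"
    and lx :: "'x measure" and lu :: "'u measure"
  assumes T [measurable]: "T \<in> bspace X \<Otimes>\<^sub>M bspace U \<rightarrow>\<^sub>M prob_algebra (bspace X)"
    and Obs [measurable]: "Obs \<in> bspace X \<rightarrow>\<^sub>M prob_algebra (bspace Y)"
    and \<gamma> [measurable]: "\<gamma> \<in> mem_space N (bspace Y) (bspace U) \<rightarrow>\<^sub>M prob_algebra (bspace U)"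
    and lx_sets: "sets lx = sets (bspace X)" and lx_nontriv: "emeasure lx X \<noteq> 0"
    and lu_sets: "sets lu = sets (bspace U)" and lu_nontriv: "emeasure lu U \<noteq> 0"
    and T_minor: "\<And>x u A. x \<in> X \<Longrightarrow> u \<in> U \<Longrightarrow> A \<in> sets (bspace X) \<Longrightarrow>
                    emeasure (T (x, u)) A \<ge> emeasure lx A"
    and \<gamma>_minor: "\<And>h A. h \<in> space (mem_space N (bspace Y) (bspace U)) \<Longrightarrow> A \<in> sets (bspace U) \<Longrightarrow>
                    emeasure (\<gamma> h) A \<ge> emeasure lu A"
begin

abbreviation "MH \<equiv> mem_space N (bspace Y) (bspace U)"
abbreviation "S \<equiv> MH \<Otimes>\<^sub>M bspace X \<Otimes>\<^sub>M bspace U"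
abbreviation "P \<equiv> fm_kernel S N T Obs \<gamma>"

lemmas measurable_kernels_subprob [measurable] =
  measurable_prob_algebraD[OF T] measurable_prob_algebraD[OF Obs] measurable_prob_algebraD[OF \<gamma>]

lemma measurable_P: "P \<in> S \<rightarrow>\<^sub>M prob_algebra S"
  unfolding fm_kernel_def Let_def by measurable

lemma T_in_prob_algebra: "w \<in> space S \<Longrightarrow> T (snd w) \<in> space (prob_algebra (bspace X))"
  using measurable_space[OF T] by (auto simp: space_pair_measure)

lemma Obs_in_prob_algebra: "x \<in> X \<Longrightarrow> Obs x \<in> space (prob_algebra (bspace Y))"
  using measurable_space[OF Obs] by simp

lemma sets_T: "w \<in> space S \<Longrightarrow> sets (T (snd w)) = sets (bspace X)"
  using T_in_prob_algebra by (simp add: space_prob_algebra)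

lemma sets_Obs: "x \<in> X \<Longrightarrow> sets (Obs x) = sets (bspace Y)"
  using Obs_in_prob_algebra by (simp add: space_prob_algebra)

lemma lx_le_T: "w \<in> space S \<Longrightarrow> A \<in> sets (bspace X) \<Longrightarrow> emeasure lx A \<le> emeasure (T (snd w)) A"
  using T_minor[of "fst (snd w)" "snd (snd w)"] by (auto simp: space_pair_measure)

lemma X_not_empty: "X \<noteq> {}"
  using lx_nontriv by auto

lemma U_not_empty: "U \<noteq> {}"
  using lu_nontriv by auto

lemma Y_not_empty: "Y \<noteq> {}"
proof -
  obtain x where "x \<in> X" using X_not_empty by blast
  then have "prob_space (Obs x)" and "space (Obs x) = Y"
    using Obs_in_prob_algebra sets_eq_imp_space_eq[OF sets_Obs] by (auto simp: space_prob_algebra)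
  then show ?thesis using prob_space.not_empty by fastforce
qed

lemma space_S_not_empty: "space S \<noteq> {}"
proof -
  obtain x y u where "x \<in> X" "y \<in> Y" "u \<in> U"
    using X_not_empty Y_not_empty U_not_empty by blast
  then have "(((\<lambda>i\<in>{..N}. y), (\<lambda>j\<in>{1..N}. u)), x, u) \<in> space S"
    by (simp add: space_pair_measure space_mem_space)
  then show ?thesis by blast
qed

lemma lx_in_subprob_algebra: "lx \<in> space (subprob_algebra (bspace X))"
proof -
  obtain w where w: "w \<in> space S" using space_S_not_empty by blast
  have "emeasure lx X \<le> emeasure (T (snd w)) X"
    using lx_le_T[OF w, of X] sets.top[of "bspace X"] by simp
  also have "\<dots> = 1"
    using in_space_prob_algebra[OF T_in_prob_algebra[OF w]] by simp
  finally show ?thesis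
    using X_not_empty sets_eq_imp_space_eq[OF lx_sets]
    by (auto simp: space_subprob_algebra lx_sets intro!: subprob_spaceI)
qed

lemma lu_in_subprob_algebra: "lu \<in> space (subprob_algebra (bspace U))"
proof -
  obtain w where w: "w \<in> space S" using space_S_not_empty by blast
  then have h: "fst w \<in> space MH" by (auto simp: space_pair_measure)
  have "emeasure lu U \<le> emeasure (\<gamma> (fst w)) U"
    using \<gamma>_minor[OF h, of U] sets.top[of "bspace U"] by simp
  also have "\<dots> = 1"
    using in_space_prob_algebra[OF measurable_space[OF \<gamma> h]] by simp
  finally show ?thesis
    using U_not_empty sets_eq_imp_space_eq[OF lu_sets]
    by (auto simp: space_subprob_algebra lu_sets intro!: subprob_spaceI)
qed

lemma measurable_lx [measurable]: "(\<lambda>_. lx) \<in> M \<rightarrow>\<^sub>M subprob_algebra (bspace X)"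
  using lx_in_subprob_algebra by simp

lemma measurable_lu [measurable]: "(\<lambda>_. lu) \<in> M \<rightarrow>\<^sub>M subprob_algebra (bspace U)"
  using lu_in_subprob_algebra by simp

definition next_mem :: "('y, 'x, 'u) fm_state \<Rightarrow> 'y \<Rightarrow> ('y, 'u) memory" where
  "next_mem z y = mem_shift N (fst z) y (snd (snd z))"

lemma measurable_next_mem [measurable]:
  assumes [measurable]: "f \<in> M \<rightarrow>\<^sub>M S" "g \<in> M \<rightarrow>\<^sub>M bspace Y"
  shows "(\<lambda>w. next_mem (f w) (g w)) \<in> M \<rightarrow>\<^sub>M MH"
  unfolding next_mem_def by measurable

lemma next_mem_in_space: "z \<in> space S \<Longrightarrow> y \<in> Y \<Longrightarrow> next_mem z y \<in> space MH"
  using measurable_space[OF measurable_next_mem[OF measurable_fst measurable_snd], of "(z, y)"]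
  by (simp add: space_pair_measure)

definition obs_act ::
  "(('y, 'u) memory \<Rightarrow> 'u measure) \<Rightarrow> ('y, 'x, 'u) fm_state \<Rightarrow> 'x \<Rightarrow> ('y, 'x, 'u) fm_state measure" where
  "obs_act K z x' = Obs x' \<bind> (\<lambda>y'. K (next_mem z y') \<bind> (\<lambda>u'. return S (next_mem z y', x', u')))"

definition fm_step ::
  "(('y, 'u) memory \<Rightarrow> 'u measure) \<Rightarrow> 'x measure \<Rightarrow> ('y, 'x, 'u) fm_state \<Rightarrow> ('y, 'x, 'u) fm_state measure" where
  "fm_step K \<mu> z = \<mu> \<bind> obs_act K z"

lemma fm_kernel_eq_fm_step: "P z = fm_step \<gamma> (T (snd z)) z"
  by (cases z) (simp add: fm_kernel_def fm_step_def obs_act_def[abs_def] next_mem_def Let_def)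

lemma measurable_obs_act [measurable]:
  assumes [measurable]: "K \<in> MH \<rightarrow>\<^sub>M subprob_algebra (bspace U)" "f \<in> M \<rightarrow>\<^sub>M S" "g \<in> M \<rightarrow>\<^sub>M bspace X"
  shows "(\<lambda>w. obs_act K (f w) (g w)) \<in> M \<rightarrow>\<^sub>M subprob_algebra S"
  unfolding obs_act_def by measurable

lemma measurable_obs_act_fixed:
  assumes "K \<in> MH \<rightarrow>\<^sub>M subprob_algebra (bspace U)" and "z \<in> space S"
  shows "obs_act K z \<in> bspace X \<rightarrow>\<^sub>M subprob_algebra S"
  using measurable_obs_act[OF assms(1) measurable_const[OF assms(2)] measurable_ident] by simp

definition "lower_first z = fm_step (\<lambda>_. lu) lx z"
definition "lower_next z = fm_step (\<lambda>_. lu) (T (snd z)) z"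

lemma measurable_lower_first: "lower_first \<in> S \<rightarrow>\<^sub>M subprob_algebra S"
  unfolding lower_first_def fm_step_def by measurable

lemma measurable_lower_next: "lower_next \<in> S \<rightarrow>\<^sub>M subprob_algebra S"
  unfolding lower_next_def fm_step_def by measurable

lemma fm_step_mono:
  assumes z [measurable]: "z \<in> space S"
    and sets_\<mu>: "sets \<mu> = sets (bspace X)" "sets \<mu>' = sets (bspace X)"
    and \<mu>_le: "\<And>A. A \<in> sets (bspace X) \<Longrightarrow> emeasure \<mu> A \<le> emeasure \<mu>' A"
    and K [measurable]: "K \<in> MH \<rightarrow>\<^sub>M subprob_algebra (bspace U)" "K' \<in> MH \<rightarrow>\<^sub>M subprob_algebra (bspace U)"
    and K_le: "\<And>h A. h \<in> space MH \<Longrightarrow> A \<in> sets (bspace U) \<Longrightarrow> emeasure (K h) A \<le> emeasure (K' h) A"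
    and A: "A \<in> sets S"
  shows "emeasure (fm_step K \<mu> z) A \<le> emeasure (fm_step K' \<mu>' z) A"
proof -
  have act_mono: "emeasure (K (next_mem z y) \<bind> (\<lambda>u'. return S (next_mem z y, x', u'))) B
      \<le> emeasure (K' (next_mem z y) \<bind> (\<lambda>u'. return S (next_mem z y, x', u'))) B"
    if x' [measurable]: "x' \<in> space (bspace X)" and y [measurable]: "y \<in> space (bspace Y)"
      and B: "B \<in> sets S" for x' y B
  proof -
    have h: "next_mem z y \<in> space MH" using next_mem_in_space z y by simp
    have ret: "(\<lambda>u'. return S (next_mem z y, x', u')) \<in> bspace U \<rightarrow>\<^sub>M subprob_algebra S"
      by measurable
    show ?thesis
      by (rule emeasure_bind_mono[OF sets_kernel[OF K(1) h] sets_kernel[OF K(2) h] ret ret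
            K_le[OF h] order_refl B])
  qed
  have obs_act_mono: "emeasure (obs_act K z x') B \<le> emeasure (obs_act K' z x') B"
    if x' [measurable]: "x' \<in> space (bspace X)" and B: "B \<in> sets S" for x' B
    unfolding obs_act_def
    using sets_Obs x' by (intro emeasure_bind_mono[OF _ _ _ _ order_refl _ B]) (auto intro: act_mono)
  show ?thesis
    unfolding fm_step_def
    by (rule emeasure_bind_mono[OF sets_\<mu> measurable_obs_act_fixed[OF K(1) z]
          measurable_obs_act_fixed[OF K(2) z] \<mu>_le obs_act_mono A])
qed

lemma lower_first_le_P:
  assumes z: "z \<in> space S" and A: "A \<in> sets S"
  shows "emeasure (lower_first z) A \<le> emeasure (P z) A"
  unfolding lower_first_def fm_kernel_eq_fm_step
  using lx_sets sets_T[OF z] lx_le_T[OF z] \<gamma>_minor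
  by (intro fm_step_mono[OF z _ _ _ _ _ _ A]) auto

lemma lower_next_le_P:
  assumes z: "z \<in> space S" and A: "A \<in> sets S"
  shows "emeasure (lower_next z) A \<le> emeasure (P z) A"
  unfolding lower_next_def fm_kernel_eq_fm_step
  using sets_T[OF z] \<gamma>_minor
  by (intro fm_step_mono[OF z _ _ _ _ _ _ A]) auto

lemma emeasure_fm_step_lu_space:
  assumes z [measurable]: "z \<in> space S" and sets_\<mu>: "sets \<mu> = sets (bspace X)"
  shows "emeasure (fm_step (\<lambda>_. lu) \<mu> z) (space S) = emeasure \<mu> X * emeasure lu U"
proof -
  have act: "emeasure (lu \<bind> (\<lambda>u'. return S (next_mem z y, x', u'))) (space S) = emeasure lu U"
    if x' [measurable]: "x' \<in> space (bspace X)" and y [measurable]: "y \<in> space (bspace Y)" for x' y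
  proof -
    have "(next_mem z y, x', u) \<in> space S" if "u \<in> U" for u
      using next_mem_in_space[OF z] x' y that by (simp add: space_pair_measure)
    then have "emeasure (lu \<bind> (\<lambda>u'. return S (next_mem z y, x', u'))) (space S) = 1 * emeasure lu (space lu)"
      using U_not_empty by (intro emeasure_bind_space_const[OF lu_sets]) (auto, measurable)
    then show ?thesis using sets_eq_imp_space_eq[OF lu_sets] by simp
  qed
  have obs_act: "emeasure (obs_act (\<lambda>_. lu) z x') (space S) = emeasure lu U"
    if x' [measurable]: "x' \<in> space (bspace X)" for x'
  proof -
    have "emeasure (obs_act (\<lambda>_. lu) z x') (space S) = emeasure lu U * emeasure (Obs x') (space (Obs x'))"
      unfolding obs_act_def
      using Y_not_empty sets_Obs x' by (intro emeasure_bind_space_const[OF _ _ _ act]) (auto, measurable)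
    then show ?thesis
      using in_space_prob_algebra[OF Obs_in_prob_algebra] sets_eq_imp_space_eq[OF sets_Obs] x' by simp
  qed
  have "emeasure (fm_step (\<lambda>_. lu) \<mu> z) (space S) = emeasure lu U * emeasure \<mu> (space \<mu>)"
    unfolding fm_step_def
    using X_not_empty
    by (intro emeasure_bind_space_const[OF sets_\<mu> _ measurable_obs_act_fixed[OF measurable_lu z] obs_act])
       auto
  then show ?thesis using sets_eq_imp_space_eq[OF sets_\<mu>] by (simp add: mult.commute)
qed

lemma obs_act_lu_bind_return:
  assumes a [measurable]: "a \<in> space S" and g [measurable]: "g \<in> S \<rightarrow>\<^sub>M S"
    and x' [measurable]: "x' \<in> space (bspace X)"
    and g_next: "\<And>y u. y \<in> Y \<Longrightarrow> u \<in> U \<Longrightarrow> g (next_mem a y, x', u) = (next_mem b y, x', u)"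
  shows "obs_act (\<lambda>_. lu) a x' \<bind> (\<lambda>w. return S (g w)) = obs_act (\<lambda>_. lu) b x'"
proof -
  have ret_g: "(\<lambda>w. return S (g w)) \<in> S \<rightarrow>\<^sub>M subprob_algebra S" by measurable
  have act: "lu \<bind> (\<lambda>u'. return S (next_mem a y, x', u')) \<bind> (\<lambda>w. return S (g w))
      = lu \<bind> (\<lambda>u'. return S (next_mem b y, x', u'))" if y [measurable]: "y \<in> space (bspace Y)" for y
  proof (rule bind_assoc_cong[OF lu_sets _ ret_g])
    show "(\<lambda>u'. return S (next_mem a y, x', u')) \<in> bspace U \<rightarrow>\<^sub>M subprob_algebra S" by measurable
    fix u assume "u \<in> space (bspace U)"
    then have "(next_mem a y, x', u) \<in> space S"
      using next_mem_in_space[OF a] x' y by (simp add: space_pair_measure)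
    then show "return S (next_mem a y, x', u) \<bind> (\<lambda>w. return S (g w)) = return S (next_mem b y, x', u)"
      using bind_return[OF ret_g] g_next y \<open>u \<in> space (bspace U)\<close> by simp
  qed
  show ?thesis
    unfolding obs_act_def
    using sets_Obs x' by (intro bind_assoc_cong[OF _ _ ret_g act]) (auto, measurable)
qed

lemma fm_step_lu_bind_return:
  assumes sets_\<mu>: "sets \<mu> = sets (bspace X)"
    and a [measurable]: "a \<in> space S" and g [measurable]: "g \<in> S \<rightarrow>\<^sub>M S"
    and g_next: "\<And>x' y u. x' \<in> X \<Longrightarrow> y \<in> Y \<Longrightarrow> u \<in> U \<Longrightarrow>
      g (next_mem a y, x', u) = (next_mem b y, x', u)"
  shows "fm_step (\<lambda>_. lu) \<mu> a \<bind> (\<lambda>w. return S (g w)) = fm_step (\<lambda>_. lu) \<mu> b"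
  unfolding fm_step_def
proof (rule bind_assoc_cong[OF sets_\<mu> measurable_obs_act_fixed[OF measurable_lu a]])
  show "(\<lambda>w. return S (g w)) \<in> S \<rightarrow>\<^sub>M subprob_algebra S" by measurable
  fix x' assume x': "x' \<in> space (bspace X)"
  then show "obs_act (\<lambda>_. lu) a x' \<bind> (\<lambda>w. return S (g w)) = obs_act (\<lambda>_. lu) b x'"
    using g_next by (intro obs_act_lu_bind_return[OF a g x']) auto
qed

definition graft :: "nat \<Rightarrow> ('y, 'x, 'u) fm_state \<Rightarrow> ('y, 'x, 'u) fm_state \<Rightarrow> ('y, 'x, 'u) fm_state" where
  "graft k z w = (mem_graft N k z (fst w), snd w)"

lemma measurable_graft:
  assumes "z \<in> space S"
  shows "graft k z \<in> S \<rightarrow>\<^sub>M S"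
proof -
  have "(\<lambda>w. mem_graft N k z (fst w)) \<in> S \<rightarrow>\<^sub>M MH"
    using assms by (intro measurable_mem_graft measurable_fst'') (auto simp: space_pair_measure)
  then show ?thesis unfolding graft_def by measurable
qed

lemma snd_graft: "snd (graft k z w) = snd w"
  by (simp add: graft_def)

lemma graft_0_next_mem: "graft 0 z (next_mem w y, x', u) = (next_mem z y, x', u)"
  by (simp add: graft_def next_mem_def mem_graft_0_mem_shift)

lemma graft_Suc_next_mem: "graft (Suc k) z (next_mem w y, x', u) = (next_mem (graft k z w) y, x', u)"
  by (simp add: graft_def next_mem_def mem_graft_Suc_mem_shift)

lemma graft_N: "w \<in> space S \<Longrightarrow> graft N z w = w"
  by (cases w) (auto simp: graft_def space_pair_measure intro: mem_graft_self)

primrec lower_chain :: "('y, 'x, 'u) fm_state \<Rightarrow> nat \<Rightarrow> ('y, 'x, 'u) fm_state measure" where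
  "lower_chain z 0 = lower_first z"
| "lower_chain z (Suc k) = lower_chain z k \<bind> lower_next"

lemma sets_lower_chain: "z \<in> space S \<Longrightarrow> sets (lower_chain z k) = sets S"
proof (induction k)
  case 0
  then show ?case using sets_kernel[OF measurable_lower_first] by simp
next
  case (Suc k)
  then have sets: "sets (lower_chain z k) = sets S" by simp
  have "lower_next \<in> lower_chain z k \<rightarrow>\<^sub>M subprob_algebra S"
    using measurable_lower_next unfolding measurable_cong_sets[OF sets refl] .
  moreover have "space (lower_chain z k) \<noteq> {}"
    using sets_eq_imp_space_eq[OF sets] space_S_not_empty by simp
  ultimately show ?case by (simp add: sets_bind_measurable)
qed

lemma lower_chain_le_kernel_pow:
  assumes z: "z \<in> space S"
  shows "A \<in> sets S \<Longrightarrow> emeasure (lower_chain z k) A \<le> emeasure (kernel_pow S P (Suc k) z) A"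
proof (induction k arbitrary: A)
  case 0
  have "kernel_pow S P (Suc 0) z = P z"
    using bind_return[OF measurable_prob_algebraD[OF measurable_P] z] by simp
  then show ?case using lower_first_le_P[OF z 0] by simp
next
  case (Suc k)
  have "emeasure (lower_chain z k \<bind> lower_next) A \<le> emeasure (kernel_pow S P (Suc k) z \<bind> P) A"
  proof (rule emeasure_bind_mono[OF sets_lower_chain[OF z] sets_kernel_pow[OF measurable_P z]
        measurable_lower_next measurable_prob_algebraD[OF measurable_P]])
    show "\<And>B. B \<in> sets S \<Longrightarrow> emeasure (lower_chain z k) B \<le> emeasure (kernel_pow S P (Suc k) z) B"
      by (rule Suc.IH)
    show "\<And>w B. w \<in> space S \<Longrightarrow> B \<in> sets S \<Longrightarrow> emeasure (lower_next w) B \<le> emeasure (P w) B"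
      by (rule lower_next_le_P)
  qed (rule Suc.prems)
  then show ?case by simp
qed

lemma emeasure_lower_chain_space:
  assumes z: "z \<in> space S"
  shows "emeasure (lower_chain z k) (space S) = emeasure lx X * emeasure lu U ^ Suc k"
proof (induction k)
  case 0
  then show ?case
    unfolding lower_chain.simps lower_first_def by (simp add: emeasure_fm_step_lu_space[OF z lx_sets])
next
  case (Suc k)
  have "emeasure (lower_chain z k \<bind> lower_next) (space S)
      = emeasure lu U * emeasure (lower_chain z k) (space (lower_chain z k))"
  proof (rule emeasure_bind_space_const[OF sets_lower_chain[OF z] space_S_not_empty measurable_lower_next])
    fix w assume w: "w \<in> space S"
    show "emeasure (lower_next w) (space S) = emeasure lu U"
      using emeasure_fm_step_lu_space[OF w sets_T[OF w]] in_space_prob_algebra[OF T_in_prob_algebra[OF w]]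
      by (simp add: lower_next_def)
  qed
  then show ?case
    using Suc sets_eq_imp_space_eq[OF sets_lower_chain[OF z]] by (simp add: mult_ac)
qed

lemma lower_chain_graft:
  assumes z0: "z0 \<in> space S" and z: "z \<in> space S"
  shows "lower_chain z k = lower_chain z0 k \<bind> (\<lambda>w. return S (graft k z w))"
proof (induction k)
  case 0
  show ?case
    unfolding lower_chain.simps lower_first_def
    by (rule fm_step_lu_bind_return[OF lx_sets z0 measurable_graft[OF z], symmetric])
       (simp add: graft_0_next_mem)
next
  case (Suc k)
  have ret_graft: "(\<lambda>w. return S (graft j z w)) \<in> S \<rightarrow>\<^sub>M subprob_algebra S" for j
    using measurable_graft[OF z] by measurable
  have graft_in_space: "w \<in> space S \<Longrightarrow> graft k z w \<in> space S" for w
    using measurable_space[OF measurable_graft[OF z]] .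
  have "lower_chain z (Suc k) = lower_chain z0 k \<bind> (\<lambda>w. lower_next (graft k z w))"
    unfolding lower_chain.simps Suc
    using graft_in_space by (intro bind_assoc_cong[OF sets_lower_chain[OF z0] ret_graft measurable_lower_next])
       (simp add: bind_return[OF measurable_lower_next])
  also have "\<dots> = lower_chain z0 k \<bind> (\<lambda>w. lower_next w \<bind> (\<lambda>w'. return S (graft (Suc k) z w')))"
  proof (rule bind_cong[OF refl])
    fix w assume "w \<in> space (lower_chain z0 k)"
    then have w: "w \<in> space S" using sets_eq_imp_space_eq[OF sets_lower_chain[OF z0]] by simp
    have "lower_next w \<bind> (\<lambda>w'. return S (graft (Suc k) z w'))
        = fm_step (\<lambda>_. lu) (T (snd w)) (graft k z w)"
      unfolding lower_next_def
      by (rule fm_step_lu_bind_return[OF sets_T[OF w] w measurable_graft[OF z]])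
         (rule graft_Suc_next_mem)
    then show "lower_next (graft k z w) = lower_next w \<bind> (\<lambda>w'. return S (graft (Suc k) z w'))"
      by (simp add: lower_next_def snd_graft)
  qed
  also have "\<dots> = lower_chain z0 (Suc k) \<bind> (\<lambda>w. return S (graft (Suc k) z w))"
    unfolding lower_chain.simps
    by (rule bind_assoc_sets[OF sets_lower_chain[OF z0] measurable_lower_next ret_graft, symmetric])
  finally show ?case .
qed

lemma lower_chain_N_independent:
  assumes "z0 \<in> space S" and "z \<in> space S"
  shows "lower_chain z N = lower_chain z0 N"
proof -
  have "lower_chain z N = lower_chain z0 N \<bind> return S"
    unfolding lower_chain_graft[OF assms]
    using graft_N sets_eq_imp_space_eq[OF sets_lower_chain[OF assms(1)]] by (intro bind_cong) auto
  then show ?thesis using bind_return''[OF sets_lower_chain[OF assms(1)]] by simp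
qed

theorem exp_ergodic_fm_kernel: "exp_ergodic S P"
proof -
  obtain z0 where z0: "z0 \<in> space S" using space_S_not_empty by blast
  show ?thesis
  proof (rule exp_ergodic_if_minorized[OF measurable_P _ sets_lower_chain[OF z0]])
    show "emeasure (lower_chain z0 N) (space S) \<noteq> 0"
      using emeasure_lower_chain_space[OF z0] lx_nontriv lu_nontriv by simp
    fix z A assume "z \<in> space S" "A \<in> sets S"
    then show "emeasure (lower_chain z0 N) A \<le> emeasure (kernel_pow S P (Suc N) z) A"
      using lower_chain_le_kernel_pow lower_chain_N_independent[OF z0] by metis
  qed simp
qed

end

theorem lemma1:
  fixes X :: "'x::euclidean_space set" and Y :: "'y::euclidean_space set"
    and U :: "'u::euclidean_space set" and N :: nat
    and T :: "'x \<times> 'u \<Rightarrow> 'x measure" and Obs :: "'x \<Rightarrow> 'y measure"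
    and \<gamma> :: "(nat \<Rightarrow> 'y) \<times> (nat \<Rightarrow> 'u) \<Rightarrow> 'u measure"
    and lx :: "'x measure" and lu :: "'u measure"
  assumes X: "X \<in> sets borel" and Y: "Y \<in> sets borel" and U: "U \<in> sets borel"
    and N: "N \<ge> 1"
    and T: "T \<in> bspace X \<Otimes>\<^sub>M bspace U \<rightarrow>\<^sub>M prob_algebra (bspace X)"
    and Obs: "Obs \<in> bspace X \<rightarrow>\<^sub>M prob_algebra (bspace Y)"
    and \<gamma>: "\<gamma> \<in> mem_space N (bspace Y) (bspace U) \<rightarrow>\<^sub>M prob_algebra (bspace U)"
    and lx_sets: "sets lx = sets (bspace X)" and lx_nontriv: "emeasure lx X \<noteq> 0"
    and lu_sets: "sets lu = sets (bspace U)" and lu_nontriv: "emeasure lu U \<noteq> 0"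
    and T_minor: "\<And>x u A. x \<in> X \<Longrightarrow> u \<in> U \<Longrightarrow> A \<in> sets (bspace X) \<Longrightarrow>
                    emeasure (T (x, u)) A \<ge> emeasure lx A"
    and \<gamma>_minor: "\<And>h A. h \<in> space (mem_space N (bspace Y) (bspace U)) \<Longrightarrow> A \<in> sets (bspace U) \<Longrightarrow>
                    emeasure (\<gamma> h) A \<ge> emeasure lu A"
  shows "exp_ergodic (mem_space N (bspace Y) (bspace U) \<Otimes>\<^sub>M bspace X \<Otimes>\<^sub>M bspace U)
           (fm_kernel (mem_space N (bspace Y) (bspace U) \<Otimes>\<^sub>M bspace X \<Otimes>\<^sub>M bspace U) N T Obs \<gamma>)"
proof -
  interpret minorized_fm_pomdp X Y U N T Obs \<gamma> lx lu
    using T Obs \<gamma> lx_sets lx_nontriv lu_sets lu_nontriv T_minor \<gamma>_minor by unfold_locales auto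
  show ?thesis by (rule exp_ergodic_fm_kernel)
qed

end
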